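(* Suppose that $\mathcal{L}$ satisfies the join-meet distributivity law and $\otimes$ is continuous. Let $\Phi=(\varphi_n)_{n\in\mathbb{N}}$ be a depth-bounded fuzzy bisimulation between image-finite fuzzy automata $\mathcal{A}$ and $\mathcal{A}'$. Then $\varphi=\bigwedge_{n\in\mathbb{N}}\varphi_n$ is a fuzzy bisimulation between $\mathcal{A}$ and $\mathcal{A}'$ and $\|\varphi\|^b_{\mathcal{A},\mathcal{A}'}=\|\Phi\|^b_{\mathcal{A},\mathcal{A}'}$.
   Context: $\mathcal{L}=\langle L,\le,\otimes,\Rightarrow,0,1\rangle$ is a complete residuated lattice: $\langle L,\le,0,1\rangle$ is a complete lattice with least element $0$ and greatest element $1$, $\langle L,\otimes,1\rangle$ is a commutative monoid, and $x\otimes y\le z$ iff $x\le (y\Rightarrow z)$. Join-meet distributivity law: $a\vee\bigwedge B=\bigwedge_{b\in B}(a\vee b)$ for all $a,B$. $\otimes$ continuous: $x\otimes\bigwedge Y=\bigwedge_{y\in Y}(x\otimes y)$. Fuzzy sets/relations are maps into $L$ ordered pointwise (infima pointwise); $\varphi^{-1}(b,a)=\varphi(a,b)$; $(\varphi\circ\psi)(a,c)=\bigvee_b\varphi(a,b)\otimes\psi(b,c)$, $(f\circ\varphi)(b)=\bigvee_a f(a)\otimes\varphi(a,b)$, $(\varphi\circ g)(a)=\bigvee_b\varphi(a,b)\otimes g(b)$; $S(g,f)=\bigwedge_a(g(a)\Rightarrow f(a))$. A fuzzy automaton over $\Sigma$ is $\mathcal{A}=\langle A,\delta^{\mathcal{A}},\sigma^{\mathcal{A}},\tau^{\mathcal{A}}\rangle$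 with $A$ nonempty, $\delta^{\mathcal{A}}:A\times\Sigma\times A\to L$, $\sigma^{\mathcal{A}},\tau^{\mathcal{A}}:A\to L$; $\delta^{\mathcal{A}}_s(x,y)=\delta^{\mathcal{A}}(x,s,y)$; similarly $\mathcal{A}'$ with states $A'$. Image-finite: each $\{y\mid\delta_s(x,y)>0\}$ finite and the initial fuzzy set has finite support. $\|\varphi\|_{\mathcal{A},\mathcal{A}'}=S(\sigma^{\mathcal{A}},\sigma^{\mathcal{A}'}\circ\varphi^{-1})$, and for $\varphi:A\times A'\to L$, $\|\varphi\|^b_{\mathcal{A},\mathcal{A}'}=\|\varphi\|_{\mathcal{A},\mathcal{A}'}\wedge\|\varphi^{-1}\|_{\mathcal{A}',\mathcal{A}}$. A fuzzy bisimulation between $\mathcal{A}$ and $\mathcal{A}'$ is $\varphi:A\times A'\to L$ with $\varphi^{-1}\circ\tau^{\mathcal{A}}\le\tau^{\mathcal{A}'}$, $\varphi\circ\tau^{\mathcal{A}'}\le\tau^{\mathcal{A}}$, and $\varphi^{-1}\circ\delta^{\mathcal{A}}_s\le\delta^{\mathcal{A}'}_s\circ\varphi^{-1}$, $\varphi\circ\delta^{\mathcal{A}'}_s\le\delta^{\mathcal{A}}_s\circ\varphi$ for all $s\in\Sigma$. A depth-bounded fuzzy bisimulation between $\mathcal{A}$ and $\mathcal{A}'$ is a sequence $(\varphi_n)_{n\in\mathbb{N}}$ of fuzzy relations $A\times A'\to L$ with $\varphi_n\le\varphi_{n-1}$ ($n\ge1$), $\varphi_0^{-1}\circ\tau^{\mathcal{A}}\le\tau^{\mathcal{A}'}$,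 $\varphi_0\circ\tau^{\mathcal{A}'}\le\tau^{\mathcal{A}}$, and for all $s\in\Sigma,n\ge1$: $\varphi_n^{-1}\circ\delta^{\mathcal{A}}_s\le\delta^{\mathcal{A}'}_s\circ\varphi_{n-1}^{-1}$ and $\varphi_n\circ\delta^{\mathcal{A}'}_s\le\delta^{\mathcal{A}}_s\circ\varphi_{n-1}$. Its norm is $\|\Phi\|^b_{\mathcal{A},\mathcal{A}'}=\bigwedge_n\|\varphi_n\|_{\mathcal{A},\mathcal{A}'}\wedge\bigwedge_n\|\varphi_n^{-1}\|_{\mathcal{A}',\mathcal{A}}$. *)

theory Defs
  imports Main
begin

text \<open>Truth values: a type 'l of class complete_lattice (0 = bot, 1 = top), with
  multiplication otimes and residuum res given as parameters.\<close>

definition complete_residuated_lattice ::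
  "('l::complete_lattice \<Rightarrow> 'l \<Rightarrow> 'l) \<Rightarrow> ('l \<Rightarrow> 'l \<Rightarrow> 'l) \<Rightarrow> bool" where
  "complete_residuated_lattice otimes res \<longleftrightarrow>
     (\<forall>x y z. otimes (otimes x y) z = otimes x (otimes y z)) \<and>
     (\<forall>x y. otimes x y = otimes y x) \<and>
     (\<forall>x. otimes x top = x) \<and>
     (\<forall>x y z. otimes x y \<le> z \<longleftrightarrow> x \<le> res y z)"

definition join_meet_distributive :: "'l::complete_lattice itself \<Rightarrow> bool" where
  "join_meet_distributive _ \<longleftrightarrow> (\<forall>(a::'l) B. sup a (Inf B) = (INF b\<in>B. sup a b))"

definition otimes_continuous :: "('l::complete_lattice \<Rightarrow> 'l \<Rightarrow> 'l) \<Rightarrow> bool" where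
  "otimes_continuous otimes \<longleftrightarrow> (\<forall>x Y. Y \<noteq> {} \<longrightarrow> otimes x (Inf Y) = (INF y\<in>Y. otimes x y))"

definition fconv :: "('a \<Rightarrow> 'b \<Rightarrow> 'l) \<Rightarrow> 'b \<Rightarrow> 'a \<Rightarrow> 'l" where
  "fconv \<phi> = (\<lambda>b a. \<phi> a b)"

definition rel_comp :: "('l::complete_lattice \<Rightarrow> 'l \<Rightarrow> 'l) \<Rightarrow>
    ('a \<Rightarrow> 'b \<Rightarrow> 'l) \<Rightarrow> ('b \<Rightarrow> 'c \<Rightarrow> 'l) \<Rightarrow> 'a \<Rightarrow> 'c \<Rightarrow> 'l" where
  "rel_comp otimes \<phi> \<psi> = (\<lambda>a c. SUP b. otimes (\<phi> a b) (\<psi> b c))"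

definition set_rel_comp :: "('l::complete_lattice \<Rightarrow> 'l \<Rightarrow> 'l) \<Rightarrow>
    ('a \<Rightarrow> 'l) \<Rightarrow> ('a \<Rightarrow> 'b \<Rightarrow> 'l) \<Rightarrow> 'b \<Rightarrow> 'l" where
  "set_rel_comp otimes f \<phi> = (\<lambda>b. SUP a. otimes (f a) (\<phi> a b))"

definition rel_set_comp :: "('l::complete_lattice \<Rightarrow> 'l \<Rightarrow> 'l) \<Rightarrow>
    ('a \<Rightarrow> 'b \<Rightarrow> 'l) \<Rightarrow> ('b \<Rightarrow> 'l) \<Rightarrow> 'a \<Rightarrow> 'l" where
  "rel_set_comp otimes \<phi> g = (\<lambda>a. SUP b. otimes (\<phi> a b) (g b))"

definition subsethood :: "('l::complete_lattice \<Rightarrow> 'l \<Rightarrow> 'l) \<Rightarrow> ('a \<Rightarrow> 'l) \<Rightarrow> ('a \<Rightarrow> 'l) \<Rightarrow> 'l" where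
  "subsethood res g f = (INF a. res (g a) (f a))"

text \<open>A fuzzy automaton is given by delta :: 'a => 's => 'a => 'l, sigma, tau :: 'a => 'l
  (state set = type 'a, automatically nonempty).\<close>

definition image_finite :: "('a \<Rightarrow> 's \<Rightarrow> 'a \<Rightarrow> 'l::complete_lattice) \<Rightarrow> ('a \<Rightarrow> 'l) \<Rightarrow> bool" where
  "image_finite \<delta> \<sigma> \<longleftrightarrow> (\<forall>x s. finite {y. \<delta> x s y \<noteq> bot}) \<and> finite {x. \<sigma> x \<noteq> bot}"

definition fnorm :: "('l::complete_lattice \<Rightarrow> 'l \<Rightarrow> 'l) \<Rightarrow> ('l \<Rightarrow> 'l \<Rightarrow> 'l) \<Rightarrow>
    ('a \<Rightarrow> 'l) \<Rightarrow> ('b \<Rightarrow> 'l) \<Rightarrow> ('a \<Rightarrow> 'b \<Rightarrow> 'l) \<Rightarrow> 'l" where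
  "fnorm otimes res \<sigma> \<sigma>' \<phi> = subsethood res \<sigma> (set_rel_comp otimes \<sigma>' (fconv \<phi>))"

definition fnorm_b :: "('l::complete_lattice \<Rightarrow> 'l \<Rightarrow> 'l) \<Rightarrow> ('l \<Rightarrow> 'l \<Rightarrow> 'l) \<Rightarrow>
    ('a \<Rightarrow> 'l) \<Rightarrow> ('b \<Rightarrow> 'l) \<Rightarrow> ('a \<Rightarrow> 'b \<Rightarrow> 'l) \<Rightarrow> 'l" where
  "fnorm_b otimes res \<sigma> \<sigma>' \<phi> = inf (fnorm otimes res \<sigma> \<sigma>' \<phi>) (fnorm otimes res \<sigma>' \<sigma> (fconv \<phi>))"

definition fuzzy_bisim :: "('l::complete_lattice \<Rightarrow> 'l \<Rightarrow> 'l) \<Rightarrow>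
    ('a \<Rightarrow> 's \<Rightarrow> 'a \<Rightarrow> 'l) \<Rightarrow> ('a \<Rightarrow> 'l) \<Rightarrow>
    ('b \<Rightarrow> 's \<Rightarrow> 'b \<Rightarrow> 'l) \<Rightarrow> ('b \<Rightarrow> 'l) \<Rightarrow> ('a \<Rightarrow> 'b \<Rightarrow> 'l) \<Rightarrow> bool" where
  "fuzzy_bisim otimes \<delta> \<tau> \<delta>' \<tau>' \<phi> \<longleftrightarrow>
     rel_set_comp otimes (fconv \<phi>) \<tau> \<le> \<tau>' \<and>
     rel_set_comp otimes \<phi> \<tau>' \<le> \<tau> \<and>
     (\<forall>s. rel_comp otimes (fconv \<phi>) (\<lambda>x y. \<delta> x s y) \<le> rel_comp otimes (\<lambda>x y. \<delta>' x s y) (fconv \<phi>)) \<and>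
     (\<forall>s. rel_comp otimes \<phi> (\<lambda>x y. \<delta>' x s y) \<le> rel_comp otimes (\<lambda>x y. \<delta> x s y) \<phi>)"

definition depth_bounded_fuzzy_bisim :: "('l::complete_lattice \<Rightarrow> 'l \<Rightarrow> 'l) \<Rightarrow>
    ('a \<Rightarrow> 's \<Rightarrow> 'a \<Rightarrow> 'l) \<Rightarrow> ('a \<Rightarrow> 'l) \<Rightarrow>
    ('b \<Rightarrow> 's \<Rightarrow> 'b \<Rightarrow> 'l) \<Rightarrow> ('b \<Rightarrow> 'l) \<Rightarrow> (nat \<Rightarrow> 'a \<Rightarrow> 'b \<Rightarrow> 'l) \<Rightarrow> bool" where
  "depth_bounded_fuzzy_bisim otimes \<delta> \<tau> \<delta>' \<tau>' \<Phi> \<longleftrightarrow>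
     (\<forall>n\<ge>1. \<Phi> n \<le> \<Phi> (n - 1)) \<and>
     rel_set_comp otimes (fconv (\<Phi> 0)) \<tau> \<le> \<tau>' \<and>
     rel_set_comp otimes (\<Phi> 0) \<tau>' \<le> \<tau> \<and>
     (\<forall>s. \<forall>n\<ge>1. rel_comp otimes (fconv (\<Phi> n)) (\<lambda>x y. \<delta> x s y)
                  \<le> rel_comp otimes (\<lambda>x y. \<delta>' x s y) (fconv (\<Phi> (n - 1)))) \<and>
     (\<forall>s. \<forall>n\<ge>1. rel_comp otimes (\<Phi> n) (\<lambda>x y. \<delta>' x s y)
                  \<le> rel_comp otimes (\<lambda>x y. \<delta> x s y) (\<Phi> (n - 1)))"

definition depth_bounded_norm_b :: "('l::complete_lattice \<Rightarrow> 'l \<Rightarrow> 'l) \<Rightarrow> ('l \<Rightarrow> 'l \<Rightarrow> 'l) \<Rightarrow>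
    ('a \<Rightarrow> 'l) \<Rightarrow> ('b \<Rightarrow> 'l) \<Rightarrow> (nat \<Rightarrow> 'a \<Rightarrow> 'b \<Rightarrow> 'l) \<Rightarrow> 'l" where
  "depth_bounded_norm_b otimes res \<sigma> \<sigma>' \<Phi> =
     inf (INF n. fnorm otimes res \<sigma> \<sigma>' (\<Phi> n)) (INF n. fnorm otimes res \<sigma>' \<sigma> (fconv (\<Phi> n)))"

end

theory Submission
  imports Defs
begin

text \<open>Image-finiteness makes every composition of \<open>\<phi>\<^sub>n\<close> with a
  transition relation or an initial fuzzy set a finite join. Join-meet distributivity lets the
  infimum of a decreasing chain pass through a finite join, and continuity of \<open>\<otimes>\<close> lets it pass
  through \<open>\<otimes>\<close>; hence composing with an image-finite relation commutes with \<open>\<Sqinter>\<^sub>n\<close>. The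
  bisimulation conditions for \<open>\<phi>\<close> then follow from those of the \<open>\<phi>\<^sub>n\<close> by taking infima, and
  since the residuum also commutes with infima, so does the norm.\<close>

lemma crl_residuation:
  "complete_residuated_lattice otimes res \<Longrightarrow> otimes x y \<le> z \<longleftrightarrow> x \<le> res y z"
  by (simp add: complete_residuated_lattice_def)

lemma crl_commute: "complete_residuated_lattice otimes res \<Longrightarrow> otimes x y = otimes y x"
  by (simp add: complete_residuated_lattice_def)

lemma crl_mono_left:
  assumes crl: "complete_residuated_lattice otimes res" and "x \<le> x'"
  shows "otimes x y \<le> otimes x' y"
proof -
  have "x' \<le> res y (otimes x' y)" using crl_residuation[OF crl] by blast
  with \<open>x \<le> x'\<close> show ?thesis using crl_residuation[OF crl] order_trans by blast
qed

lemma crl_mono_right: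
  "complete_residuated_lattice otimes res \<Longrightarrow> y \<le> y' \<Longrightarrow> otimes x y \<le> otimes x y'"
  using crl_mono_left crl_commute by metis

lemma crl_bot_left: "complete_residuated_lattice otimes res \<Longrightarrow> otimes bot y = bot"
  using crl_residuation[of otimes res bot y bot] by (simp add: bot_unique)

lemma crl_res_INF:
  assumes crl: "complete_residuated_lattice otimes res"
  shows "res y (INF i\<in>I. X i) = (INF i\<in>I. res y (X i))"
proof -
  have "z \<le> res y (INF i\<in>I. X i) \<longleftrightarrow> z \<le> (INF i\<in>I. res y (X i))" for z
    by (simp add: crl_residuation[OF crl, symmetric] le_INF_iff)
  then show ?thesis by (meson order.antisym order.refl)
qed

lemma otimes_continuous_INF_range:
  assumes "otimes_continuous otimes"
  shows "otimes x (INF n. P n) = (INF n. otimes x (P n))"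
proof -
  have "otimes x (Inf (range P)) = (INF y\<in>range P. otimes x y)"
    using assms unfolding otimes_continuous_def by blast
  then show ?thesis by (simp add: image_image)
qed

lemma join_meet_distributive_INF_range:
  "join_meet_distributive TYPE('l::complete_lattice) \<Longrightarrow>
     sup (a::'l) (INF n. f n) = (INF n. sup a (f n))"
  unfolding join_meet_distributive_def by (simp add: image_image)

lemma INF_SUP_finite_le_SUP_INF_antimono:
  fixes c :: "'c \<Rightarrow> nat \<Rightarrow> 'l::complete_lattice"
  assumes jmd: "join_meet_distributive TYPE('l)" and "finite F"
    and anti: "\<And>i. antimono (c i)"
  shows "(INF n. SUP i\<in>F. c i n) \<le> (SUP i\<in>F. INF n. c i n)"
  using \<open>finite F\<close>
proof (induction F rule: finite_induct)
  case empty
  then show ?case by simp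
next
  case (insert j G)
  define S where "S m = (SUP i\<in>G. c i m)" for m
  have "antimono S"
    unfolding S_def by (intro antimonoI SUP_mono) (use anti in \<open>blast dest: antimonoD\<close>)
  have "(INF n. sup (c j n) (S n)) \<le> (INF m. INF n. sup (S m) (c j n))"
  proof (intro INF_greatest)
    \<comment> \<open>both chains decrease, so the diagonal term at index \<open>max m n\<close> lies below \<open>S m \<squnion> c j n\<close>\<close>
    fix m n
    have "(INF k. sup (c j k) (S k)) \<le> sup (c j (max m n)) (S (max m n))"
      by (rule INF_lower) simp
    also have "\<dots> \<le> sup (S m) (c j n)"
      using antimonoD[OF anti, of n "max m n" j] antimonoD[OF \<open>antimono S\<close>, of m "max m n"]
      by (simp add: le_supI1 le_supI2)
    finally show "(INF k. sup (c j k) (S k)) \<le> sup (S m) (c j n)" .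
  qed
  also have "\<dots> = (INF m. sup (INF n. c j n) (S m))"
    by (simp add: join_meet_distributive_INF_range[OF jmd] sup_commute)
  also have "\<dots> = sup (INF n. c j n) (INF m. S m)"
    by (simp add: join_meet_distributive_INF_range[OF jmd])
  also have "\<dots> \<le> sup (INF n. c j n) (SUP i\<in>G. INF n. c i n)"
    using insert.IH unfolding S_def by (rule sup_mono[OF order.refl])
  finally show ?case unfolding S_def by simp
qed

lemma SUP_eq_SUP_support:
  fixes f :: "'c \<Rightarrow> 'l::complete_lattice"
  assumes "\<And>y. y \<notin> F \<Longrightarrow> f y = bot"
  shows "(SUP y. f y) = (SUP y\<in>F. f y)"
proof (rule order.antisym)
  show "(SUP y. f y) \<le> (SUP y\<in>F. f y)"
    by (rule SUP_least) (metis SUP_upper assms bot.extremum)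
qed (rule SUP_subset_mono; simp)

lemma antimono_app: "antimono \<Phi> \<Longrightarrow> antimono (\<lambda>n. \<Phi> n x)"
  by (intro antimonoI) (auto dest: antimonoD le_funD)

lemma SUP_otimes_INF_antimono:
  fixes d :: "'c \<Rightarrow> 'l::complete_lattice"
    and P :: "nat \<Rightarrow> 'c \<Rightarrow> 'l"
  assumes crl: "complete_residuated_lattice otimes res"
    and jmd: "join_meet_distributive TYPE('l)"
    and cont: "otimes_continuous otimes"
    and fin: "finite {y. d y \<noteq> bot}"
    and anti: "\<And>y. antimono (\<lambda>n. P n y)"
  shows "(SUP y. otimes (d y) (INF n. P n y)) = (INF n. SUP y. otimes (d y) (P n y))"
proof (rule order.antisym)
  define F where "F = {y. d y \<noteq> bot}"
  have on_F: "(SUP y. otimes (d y) (Q y)) = (SUP y\<in>F. otimes (d y) (Q y))" for Q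
    by (rule SUP_eq_SUP_support) (simp add: F_def crl_bot_left[OF crl])
  have anti_otimes: "antimono (\<lambda>n. otimes (d y) (P n y))" for y
    by (intro antimonoI crl_mono_right[OF crl] antimonoD[OF anti])
  have "(INF n. SUP y. otimes (d y) (P n y)) = (INF n. SUP y\<in>F. otimes (d y) (P n y))"
    by (simp add: on_F)
  also have "\<dots> \<le> (SUP y\<in>F. INF n. otimes (d y) (P n y))"
    using INF_SUP_finite_le_SUP_INF_antimono[OF jmd, where c = "\<lambda>y n. otimes (d y) (P n y)"]
      fin anti_otimes unfolding F_def by blast
  also have "\<dots> = (SUP y\<in>F. otimes (d y) (INF n. P n y))"
    by (simp add: otimes_continuous_INF_range[OF cont])
  also have "\<dots> = (SUP y. otimes (d y) (INF n. P n y))"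
    by (simp add: on_F)
  finally show "(INF n. SUP y. otimes (d y) (P n y)) \<le> (SUP y. otimes (d y) (INF n. P n y))" .
  show "(SUP y. otimes (d y) (INF n. P n y)) \<le> (INF n. SUP y. otimes (d y) (P n y))"
    by (intro INF_greatest SUP_mono') (auto intro: crl_mono_right[OF crl] INF_lower)
qed

lemma rel_comp_mono_left:
  assumes crl: "complete_residuated_lattice otimes res" and "\<phi> \<le> \<phi>'"
  shows "rel_comp otimes \<phi> \<psi> \<le> rel_comp otimes \<phi>' \<psi>"
  unfolding rel_comp_def using \<open>\<phi> \<le> \<phi>'\<close>
  by (intro le_funI SUP_mono' crl_mono_left[OF crl]) (simp add: le_fun_def)

lemma rel_set_comp_mono_left:
  assumes crl: "complete_residuated_lattice otimes res" and "\<phi> \<le> \<phi>'"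
  shows "rel_set_comp otimes \<phi> g \<le> rel_set_comp otimes \<phi>' g"
  unfolding rel_set_comp_def using \<open>\<phi> \<le> \<phi>'\<close>
  by (intro le_funI SUP_mono' crl_mono_left[OF crl]) (simp add: le_fun_def)

lemma rel_comp_INF_antimono:
  fixes \<psi> :: "'a \<Rightarrow> 'b \<Rightarrow> 'l::complete_lattice"
    and \<Phi> :: "nat \<Rightarrow> 'b \<Rightarrow> 'c \<Rightarrow> 'l"
  assumes crl: "complete_residuated_lattice otimes res"
    and jmd: "join_meet_distributive TYPE('l)"
    and cont: "otimes_continuous otimes"
    and fin: "\<And>x. finite {y. \<psi> x y \<noteq> bot}"
    and anti: "antimono \<Phi>"
  shows "rel_comp otimes \<psi> (\<lambda>y z. INF n. \<Phi> n y z) = (\<lambda>x z. INF n. rel_comp otimes \<psi> (\<Phi> n) x z)"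
  unfolding rel_comp_def
  by (intro ext SUP_otimes_INF_antimono[OF crl jmd cont fin] antimono_app[OF antimono_app[OF anti]])

lemma set_rel_comp_INF_antimono:
  fixes f :: "'a \<Rightarrow> 'l::complete_lattice"
    and \<Phi> :: "nat \<Rightarrow> 'a \<Rightarrow> 'b \<Rightarrow> 'l"
  assumes crl: "complete_residuated_lattice otimes res"
    and jmd: "join_meet_distributive TYPE('l)"
    and cont: "otimes_continuous otimes"
    and fin: "finite {x. f x \<noteq> bot}"
    and anti: "antimono \<Phi>"
  shows "set_rel_comp otimes f (\<lambda>x y. INF n. \<Phi> n x y) = (\<lambda>y. INF n. set_rel_comp otimes f (\<Phi> n) y)"
  unfolding set_rel_comp_def
  by (intro ext SUP_otimes_INF_antimono[OF crl jmd cont fin] antimono_app[OF antimono_app[OF anti]])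

lemma subsethood_INF:
  "complete_residuated_lattice otimes res \<Longrightarrow>
     subsethood res g (\<lambda>x. INF n. f n x) = (INF n. subsethood res g (f n))"
  unfolding subsethood_def by (simp add: crl_res_INF) (rule INF_commute)

lemma antimono_fconv:
  fixes \<Phi> :: "'i::order \<Rightarrow> 'a \<Rightarrow> 'b \<Rightarrow> 'l::order"
  assumes "antimono \<Phi>"
  shows "antimono (\<lambda>n. fconv (\<Phi> n))"
proof (intro antimonoI le_funI)
  fix m n :: 'i and b a
  assume "m \<le> n"
  then show "fconv (\<Phi> n) b a \<le> fconv (\<Phi> m) b a"
    unfolding fconv_def using antimonoD[OF assms] le_funD by metis
qed

lemma fconv_INF: "fconv (\<lambda>a b. INF n. \<Phi> n a b) = (\<lambda>b a. INF n. fconv (\<Phi> n) b a)"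
  by (simp add: fconv_def)

lemma fnorm_INF_antimono:
  fixes \<sigma>' :: "'b \<Rightarrow> 'l::complete_lattice"
    and \<Phi> :: "nat \<Rightarrow> 'a \<Rightarrow> 'b \<Rightarrow> 'l"
  assumes crl: "complete_residuated_lattice otimes res"
    and jmd: "join_meet_distributive TYPE('l)"
    and cont: "otimes_continuous otimes"
    and fin: "finite {y. \<sigma>' y \<noteq> bot}"
    and anti: "antimono \<Phi>"
  shows "fnorm otimes res \<sigma> \<sigma>' (\<lambda>a b. INF n. \<Phi> n a b) = (INF n. fnorm otimes res \<sigma> \<sigma>' (\<Phi> n))"
  unfolding fnorm_def fconv_INF
  by (simp add: set_rel_comp_INF_antimono[OF crl jmd cont fin antimono_fconv[OF anti]]
      subsethood_INF[OF crl])

lemma rel_comp_INF_le_of_chain: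
  fixes \<psi>' :: "'a \<Rightarrow> 'a \<Rightarrow> 'l::complete_lattice"
    and \<Phi> :: "nat \<Rightarrow> 'a \<Rightarrow> 'b \<Rightarrow> 'l"
  assumes crl: "complete_residuated_lattice otimes res"
    and jmd: "join_meet_distributive TYPE('l)"
    and cont: "otimes_continuous otimes"
    and fin: "\<And>x. finite {y. \<psi>' x y \<noteq> bot}"
    and anti: "antimono \<Phi>"
    and step: "\<And>n. rel_comp otimes (\<Phi> (Suc n)) \<psi> \<le> rel_comp otimes \<psi>' (\<Phi> n)"
  shows "rel_comp otimes (\<lambda>x y. INF n. \<Phi> n x y) \<psi> \<le> rel_comp otimes \<psi>' (\<lambda>x y. INF n. \<Phi> n x y)"
proof -
  have "rel_comp otimes (\<lambda>x y. INF n. \<Phi> n x y) \<psi> \<le> rel_comp otimes \<psi>' (\<Phi> n)" for n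
  proof -
    have "(\<lambda>x y. INF n. \<Phi> n x y) \<le> \<Phi> (Suc n)"
      by (auto simp: le_fun_def intro: INF_lower)
    then show ?thesis using rel_comp_mono_left[OF crl] step order_trans by blast
  qed
  then show ?thesis
    by (simp add: rel_comp_INF_antimono[OF crl jmd cont fin anti] le_fun_def le_INF_iff)
qed

lemma depth_bounded_fuzzy_bisim_SucD:
  assumes "depth_bounded_fuzzy_bisim otimes \<delta> \<tau> \<delta>' \<tau>' \<Phi>"
  shows "\<Phi> (Suc n) \<le> \<Phi> n"
    and "rel_comp otimes (fconv (\<Phi> (Suc n))) (\<lambda>x y. \<delta> x s y)
           \<le> rel_comp otimes (\<lambda>x y. \<delta>' x s y) (fconv (\<Phi> n))"
    and "rel_comp otimes (\<Phi> (Suc n)) (\<lambda>x y. \<delta>' x s y)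
           \<le> rel_comp otimes (\<lambda>x y. \<delta> x s y) (\<Phi> n)"
  using assms unfolding depth_bounded_fuzzy_bisim_def
  by (metis diff_Suc_1 le_add1 plus_1_eq_Suc)+

lemma depth_bounded_fuzzy_bisim_antimono:
  "depth_bounded_fuzzy_bisim otimes \<delta> \<tau> \<delta>' \<tau>' \<Phi> \<Longrightarrow> antimono \<Phi>"
  by (simp add: antimono_iff_le_Suc depth_bounded_fuzzy_bisim_SucD(1))

lemma fuzzy_bisim_INF_depth_bounded:
  fixes \<delta> :: "'a \<Rightarrow> 's \<Rightarrow> 'a \<Rightarrow> 'l::complete_lattice"
  assumes crl: "complete_residuated_lattice otimes res"
    and jmd: "join_meet_distributive TYPE('l)"
    and cont: "otimes_continuous otimes"
    and fin: "\<And>x s. finite {y. \<delta> x s y \<noteq> bot}"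
    and fin': "\<And>x s. finite {y. \<delta>' x s y \<noteq> bot}"
    and db: "depth_bounded_fuzzy_bisim otimes \<delta> \<tau> \<delta>' \<tau>' \<Phi>"
  shows "fuzzy_bisim otimes \<delta> \<tau> \<delta>' \<tau>' (\<lambda>a b. INF n. \<Phi> n a b)"
proof -
  let ?\<phi> = "\<lambda>a b. INF n. \<Phi> n a b"
  have anti: "antimono \<Phi>" by (rule depth_bounded_fuzzy_bisim_antimono[OF db])
  have below: "?\<phi> \<le> \<Phi> 0"
    by (auto simp: le_fun_def intro: INF_lower)
  then have below_conv: "fconv ?\<phi> \<le> fconv (\<Phi> 0)"
    by (simp add: fconv_def le_fun_def)
  have final_0: "rel_set_comp otimes (fconv (\<Phi> 0)) \<tau> \<le> \<tau>'" "rel_set_comp otimes (\<Phi> 0) \<tau>' \<le> \<tau>"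
    using db by (simp_all add: depth_bounded_fuzzy_bisim_def)
  have "rel_set_comp otimes (fconv ?\<phi>) \<tau> \<le> \<tau>'"
    using rel_set_comp_mono_left[OF crl below_conv] final_0(1) by (rule order_trans)
  moreover have "rel_set_comp otimes ?\<phi> \<tau>' \<le> \<tau>"
    using rel_set_comp_mono_left[OF crl below] final_0(2) by (rule order_trans)
  moreover have "rel_comp otimes (fconv ?\<phi>) (\<lambda>x y. \<delta> x s y)
      \<le> rel_comp otimes (\<lambda>x y. \<delta>' x s y) (fconv ?\<phi>)" for s
    unfolding fconv_INF
    by (rule rel_comp_INF_le_of_chain[OF crl jmd cont fin' antimono_fconv[OF anti]
          depth_bounded_fuzzy_bisim_SucD(2)[OF db]])
  moreover have "rel_comp otimes ?\<phi> (\<lambda>x y. \<delta>' x s y) \<le> rel_comp otimes (\<lambda>x y. \<delta> x s y) ?\<phi>" for s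
    by (rule rel_comp_INF_le_of_chain[OF crl jmd cont fin anti depth_bounded_fuzzy_bisim_SucD(3)[OF db]])
  ultimately show ?thesis
    unfolding fuzzy_bisim_def by (intro conjI allI)
qed

theorem mainTheorem11:
  fixes otimes :: "'l::complete_lattice \<Rightarrow> 'l \<Rightarrow> 'l"
    and res :: "'l \<Rightarrow> 'l \<Rightarrow> 'l"
    and \<delta> :: "'a \<Rightarrow> 's \<Rightarrow> 'a \<Rightarrow> 'l" and \<sigma> \<tau> :: "'a \<Rightarrow> 'l"
    and \<delta>' :: "'b \<Rightarrow> 's \<Rightarrow> 'b \<Rightarrow> 'l" and \<sigma>' \<tau>' :: "'b \<Rightarrow> 'l"
    and \<Phi> :: "nat \<Rightarrow> 'a \<Rightarrow> 'b \<Rightarrow> 'l"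
  assumes "complete_residuated_lattice otimes res"
    and "join_meet_distributive TYPE('l)"
    and "otimes_continuous otimes"
    and "image_finite \<delta> \<sigma>" and "image_finite \<delta>' \<sigma>'"
    and "depth_bounded_fuzzy_bisim otimes \<delta> \<tau> \<delta>' \<tau>' \<Phi>"
  shows "fuzzy_bisim otimes \<delta> \<tau> \<delta>' \<tau>' (\<lambda>a b. INF n. \<Phi> n a b) \<and>
         fnorm_b otimes res \<sigma> \<sigma>' (\<lambda>a b. INF n. \<Phi> n a b) = depth_bounded_norm_b otimes res \<sigma> \<sigma>' \<Phi>"
proof
  note crl = assms(1) and jmd = assms(2) and cont = assms(3)
  have fin: "\<And>x s. finite {y. \<delta> x s y \<noteq> bot}" "finite {x. \<sigma> x \<noteq> bot}"
    and fin': "\<And>x s. finite {y. \<delta>' x s y \<noteq> bot}" "finite {x. \<sigma>' x \<noteq> bot}"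
    using assms(4,5) by (auto simp: image_finite_def)
  show "fuzzy_bisim otimes \<delta> \<tau> \<delta>' \<tau>' (\<lambda>a b. INF n. \<Phi> n a b)"
    by (rule fuzzy_bisim_INF_depth_bounded[OF crl jmd cont fin(1) fin'(1) assms(6)])
  have anti: "antimono \<Phi>" by (rule depth_bounded_fuzzy_bisim_antimono[OF assms(6)])
  show "fnorm_b otimes res \<sigma> \<sigma>' (\<lambda>a b. INF n. \<Phi> n a b) = depth_bounded_norm_b otimes res \<sigma> \<sigma>' \<Phi>"
    unfolding fnorm_b_def depth_bounded_norm_b_def
    by (simp add: fconv_INF fnorm_INF_antimono[OF crl jmd cont fin'(2) anti]
        fnorm_INF_antimono[OF crl jmd cont fin(2) antimono_fconv[OF anti]])
qed

end
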